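(* Let $s,t$ be integers with $s\ge t\ge 2$, and let $c\ge s$ be a real number such that for every real $w>1$ and every graph $G$ with $\alpha(G)<s$ and $\omega(G)\le w$ we have $|G|< cw^{s-1}/(\log w)^{s-2}$. If $G$ is a $K_{s,t}$-free graph and $w>1$ is a real number with $w\ge \omega(G)$, then $$|G|\le \frac{c\,\alpha(G)^t w^{s-1}}{(\log w)^{s-2}}.$$
   Context: All graphs are finite and simple; $|G|$ is the number of vertices, $\alpha(G)$ the maximum size of a stable set and $\omega(G)$ the maximum size of a clique in $G$. A graph is $K_{s,t}$-free if it has no induced subgraph isomorphic to the complete bipartite graph $K_{s,t}$. Logarithms are to base two. *)

theory Defs
  imports Complex_Main
begin

text \<open>A finite simple graph: finite vertex set V and a symmetric irreflexive
  adjacency relation E (only its restriction to V matters).\<close>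
definition graph :: "'a set \<Rightarrow> ('a \<Rightarrow> 'a \<Rightarrow> bool) \<Rightarrow> bool" where
  "graph V E \<longleftrightarrow> finite V \<and> (\<forall>x y. E x y \<longrightarrow> E y x) \<and> (\<forall>x. \<not> E x x)"

definition clique_in :: "'a set \<Rightarrow> ('a \<Rightarrow> 'a \<Rightarrow> bool) \<Rightarrow> 'a set \<Rightarrow> bool" where
  "clique_in V E K \<longleftrightarrow> K \<subseteq> V \<and> (\<forall>x\<in>K. \<forall>y\<in>K. x \<noteq> y \<longrightarrow> E x y)"

definition stable_in :: "'a set \<Rightarrow> ('a \<Rightarrow> 'a \<Rightarrow> bool) \<Rightarrow> 'a set \<Rightarrow> bool" where
  "stable_in V E S \<longleftrightarrow> S \<subseteq> V \<and> (\<forall>x\<in>S. \<forall>y\<in>S. \<not> E x y)"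

definition alpha :: "'a set \<Rightarrow> ('a \<Rightarrow> 'a \<Rightarrow> bool) \<Rightarrow> nat" where
  "alpha V E = Max {card S | S. stable_in V E S}"

definition omega :: "'a set \<Rightarrow> ('a \<Rightarrow> 'a \<Rightarrow> bool) \<Rightarrow> nat" where
  "omega V E = Max {card K | K. clique_in V E K}"

text \<open>No induced subgraph isomorphic to K_{s,t}: no disjoint stable sets A, B
  of sizes s, t with every vertex of A adjacent to every vertex of B.\<close>
definition Kst_free :: "nat \<Rightarrow> nat \<Rightarrow> 'a set \<Rightarrow> ('a \<Rightarrow> 'a \<Rightarrow> bool) \<Rightarrow> bool" where
  "Kst_free s t V E \<longleftrightarrow> \<not> (\<exists>A B. A \<subseteq> V \<and> B \<subseteq> V \<and> A \<inter> B = {} \<and>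
      card A = s \<and> card B = t \<and> stable_in V E A \<and> stable_in V E B \<and>
      (\<forall>a\<in>A. \<forall>b\<in>B. E a b))"

end

theory Submission
  imports Defs
begin

text \<open>Fix a maximum stable set \<open>S\<close>, so \<open>|S| = \<alpha>(G)\<close>. By maximality every vertex \<open>v\<close> has a
  nonempty trace \<open>T(v) = {y \<in> S. y = v \<or> vy \<in> E}\<close>. Put \<open>v\<close> into the class of \<open>T(v)\<close> if
  \<open>|T(v)| < t\<close>, and otherwise into the class of some \<open>t\<close>-subset of \<open>T(v)\<close>. If \<open>Q\<close> is stable in the
  class of a trace \<open>Y\<close>, then \<open>Q \<union> (S - Y)\<close> is stable, so \<open>|Q| \<le> |Y| < t \<le> s\<close>; every vertex in
  the class of a \<open>t\<close>-set \<open>Y \<subseteq> S\<close> is complete to the stable set \<open>Y\<close>, so \<open>K\<^sub>s\<^sub>,\<^sub>t\<close>-freeness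
  gives stable sets of size less than \<open>s\<close> there as well. Hence \<open>V\<close> is covered by at most
  \<open>\<alpha>(G)\<^sup>t\<close> induced subgraphs with stability number less than \<open>s\<close> and clique number at most
  \<open>w\<close>, each of which has fewer than \<open>c w\<^sup>s\<^sup>-\<^sup>1 / (log w)\<^sup>s\<^sup>-\<^sup>2\<close> vertices.\<close>

lemma graph_subset: "graph V E \<Longrightarrow> C \<subseteq> V \<Longrightarrow> graph C E"
  by (auto simp: graph_def intro: finite_subset)

lemma graph_finite: "graph V E \<Longrightarrow> finite V"
  by (simp add: graph_def)

lemma graph_sym: "graph V E \<Longrightarrow> E x y \<Longrightarrow> E y x"
  by (simp add: graph_def)

lemma graph_irrefl: "graph V E \<Longrightarrow> \<not> E x x"
  by (simp add: graph_def)

lemma finite_stable: "graph V E \<Longrightarrow> stable_in V E S \<Longrightarrow> finite S"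
  unfolding graph_def stable_in_def by (blast intro: finite_subset)

lemma finite_card_stable_sets: "finite V \<Longrightarrow> finite {card S | S. stable_in V E S}"
  by (rule finite_subset[of _ "{..card V}"]) (auto simp: stable_in_def intro: card_mono)

lemma finite_card_cliques: "finite V \<Longrightarrow> finite {card K | K. clique_in V E K}"
  by (rule finite_subset[of _ "{..card V}"]) (auto simp: clique_in_def intro: card_mono)

lemma card_le_alpha: "finite V \<Longrightarrow> stable_in V E S \<Longrightarrow> card S \<le> alpha V E"
  unfolding alpha_def by (rule Max_ge) (auto intro: finite_card_stable_sets)

lemma ex_maximum_stable: "finite V \<Longrightarrow> \<exists>S. stable_in V E S \<and> card S = alpha V E"
proof -
  assume "finite V"
  moreover have "stable_in V E {}" by (simp add: stable_in_def)
  ultimately have "alpha V E \<in> {card S | S. stable_in V E S}"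
    unfolding alpha_def by (intro Max_in finite_card_stable_sets) auto
  then show ?thesis by auto
qed

lemma alpha_lessI: "finite V \<Longrightarrow> (\<And>Q. stable_in V E Q \<Longrightarrow> card Q < s) \<Longrightarrow> alpha V E < s"
  using ex_maximum_stable by metis

lemma omega_mono: "finite V \<Longrightarrow> C \<subseteq> V \<Longrightarrow> omega C E \<le> omega V E"
proof -
  assume "finite V" and "C \<subseteq> V"
  moreover have "clique_in C E {}" by (simp add: clique_in_def)
  ultimately have "omega C E \<in> {card K | K. clique_in C E K}"
    unfolding omega_def by (intro Max_in finite_card_cliques) (auto intro: finite_subset)
  then obtain K where "clique_in C E K" and "card K = omega C E" by auto
  moreover from \<open>clique_in C E K\<close> \<open>C \<subseteq> V\<close> have "clique_in V E K"
    by (auto simp: clique_in_def)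
  then have "card K \<le> omega V E"
    unfolding omega_def by (intro Max_ge finite_card_cliques \<open>finite V\<close>) auto
  ultimately show ?thesis by simp
qed

lemma maximum_stable_dominating:
  assumes "graph V E" and "stable_in V E S" and "card S = alpha V E" and "v \<in> V"
  shows "\<exists>y\<in>S. v = y \<or> E v y"
proof (rule ccontr)
  assume no_nbr: "\<not> (\<exists>y\<in>S. v = y \<or> E v y)"
  then have "stable_in V E (insert v S)"
    using assms(2,4) graph_sym[OF assms(1)] graph_irrefl[OF assms(1)]
    unfolding stable_in_def by blast
  then have "card (insert v S) \<le> card S"
    using card_le_alpha[OF graph_finite[OF assms(1)]] assms(3) by metis
  moreover have "finite S" "v \<notin> S" using finite_stable[OF assms(1,2)] no_nbr by auto
  ultimately show False by simp
qed

lemma card_stable_le_exchange: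
  assumes "graph V E" and "stable_in V E S" and "card S = alpha V E" and "Y \<subseteq> S"
    and "stable_in V E Q" and "\<forall>x\<in>Q. \<forall>y\<in>S - Y. x \<noteq> y \<and> \<not> E x y"
  shows "card Q \<le> card Y"
proof -
  have "finite S" "finite Q"
    using finite_stable[OF assms(1)] assms(2,5) by blast+
  have "finite Y" using assms(4) \<open>finite S\<close> by (rule finite_subset)
  have "\<not> E y x" if "x \<in> Q" "y \<in> S - Y" for x y
    using assms(6) that graph_sym[OF assms(1), of y x] by blast
  then have "stable_in V E (Q \<union> (S - Y))"
    using assms(2,5,6) unfolding stable_in_def by blast
  then have "card (Q \<union> (S - Y)) \<le> card S"
    using card_le_alpha[OF graph_finite[OF assms(1)]] assms(3) by metis
  moreover have "card (Q \<union> (S - Y)) = card Q + (card S - card Y)"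
    using assms(4,6) \<open>finite S\<close> \<open>finite Q\<close> \<open>finite Y\<close>
    by (subst card_Un_disjoint) (auto simp: card_Diff_subset)
  moreover have "card Y \<le> card S" using assms(4) \<open>finite S\<close> by (rule card_mono[rotated])
  ultimately show ?thesis by linarith
qed

lemma Kst_free_common_neighbourhood:
  assumes "graph V E" and "Kst_free s t V E" and "stable_in V E B" and "card B = t"
    and "stable_in V E Q" and "\<forall>x\<in>Q. \<forall>y\<in>B. E x y"
  shows "card Q < s"
proof (rule ccontr)
  assume "\<not> card Q < s"
  then obtain A where "A \<subseteq> Q" and "card A = s"
    by (meson not_less obtain_subset_with_card_n)
  moreover have "A \<inter> B = {}"
    using \<open>A \<subseteq> Q\<close> assms(6) graph_irrefl[OF assms(1)] by blast
  moreover have "stable_in V E A" and "A \<subseteq> V" and "B \<subseteq> V"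
    using \<open>A \<subseteq> Q\<close> assms(3,5) unfolding stable_in_def by blast+
  moreover have "\<forall>a\<in>A. \<forall>b\<in>B. E a b" using \<open>A \<subseteq> Q\<close> assms(6) by blast
  ultimately have "A \<subseteq> V \<and> B \<subseteq> V \<and> A \<inter> B = {} \<and> card A = s \<and> card B = t \<and>
      stable_in V E A \<and> stable_in V E B \<and> (\<forall>a\<in>A. \<forall>b\<in>B. E a b)"
    using assms(3,4) by simp
  then show False using assms(2) unfolding Kst_free_def by blast
qed

lemma card_nonempty_subsets_le_power:
  assumes "finite S"
  shows "card {Y. Y \<subseteq> S \<and> Y \<noteq> {} \<and> card Y \<le> t} \<le> card S ^ t"
proof -
  let ?lists = "{xs. set xs \<subseteq> S \<and> length xs = t}"
  have "{Y. Y \<subseteq> S \<and> Y \<noteq> {} \<and> card Y \<le> t} \<subseteq> set ` ?lists"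
  proof
    fix Y assume "Y \<in> {Y. Y \<subseteq> S \<and> Y \<noteq> {} \<and> card Y \<le> t}"
    then have "Y \<subseteq> S" "Y \<noteq> {}" "card Y \<le> t" by auto
    have "finite Y" using \<open>Y \<subseteq> S\<close> assms by (rule finite_subset)
    then obtain xs where xs: "set xs = Y" "distinct xs"
      using finite_distinct_list by blast
    define ys where "ys = xs @ replicate (t - length xs) (hd xs)"
    have "set ys = Y" and "length ys = t"
      using xs \<open>Y \<noteq> {}\<close> \<open>card Y \<le> t\<close> distinct_card[of xs] by (auto simp: ys_def)
    with \<open>Y \<subseteq> S\<close> show "Y \<in> set ` ?lists" by auto
  qed
  then have "card {Y. Y \<subseteq> S \<and> Y \<noteq> {} \<and> card Y \<le> t} \<le> card (set ` ?lists)"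
    by (rule card_mono[OF finite_imageI[OF finite_lists_length_eq[OF assms]]])
  also have "\<dots> \<le> card ?lists"
    by (rule card_image_le[OF finite_lists_length_eq[OF assms]])
  also have "\<dots> = card S ^ t"
    by (rule card_lists_length_eq[OF assms])
  finally show ?thesis .
qed

lemma card_Union_le_mult:
  fixes b :: real
  assumes "finite (\<Union>F)" and "\<And>C. C \<in> F \<Longrightarrow> real (card C) \<le> b"
  shows "real (card (\<Union>F)) \<le> real (card F) * b"
proof -
  have "real (card (\<Union>F)) \<le> (\<Sum>C\<in>F. real (card C))"
    unfolding of_nat_sum[symmetric] of_nat_le_iff by (rule card_Union_le_sum_card)
  also have "\<dots> \<le> real (card F) * b"
    using assms(2) by (rule sum_bounded_above)
  finally show ?thesis .
qed

definition stable_trace :: "('a \<Rightarrow> 'a \<Rightarrow> bool) \<Rightarrow> 'a set \<Rightarrow> 'a \<Rightarrow> 'a set" where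
  "stable_trace E S v = {y \<in> S. v = y \<or> E v y}"

definition trace_cell :: "'a set \<Rightarrow> ('a \<Rightarrow> 'a \<Rightarrow> bool) \<Rightarrow> nat \<Rightarrow> 'a set \<Rightarrow> 'a set \<Rightarrow> 'a set" where
  "trace_cell V E t S Y =
    (if card Y < t then {v \<in> V. stable_trace E S v = Y} else {v \<in> V. \<forall>y\<in>Y. E v y})"

lemma trace_cells_cover:
  assumes "graph V E" and "stable_in V E S" and "card S = alpha V E" and "2 \<le> t"
  shows "\<Union> (trace_cell V E t S ` {Y. Y \<subseteq> S \<and> Y \<noteq> {} \<and> card Y \<le> t}) = V"
    (is "\<Union> (?cell ` ?Ys) = V")
proof
  show "\<Union> (?cell ` ?Ys) \<subseteq> V" by (auto simp: trace_cell_def)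
  show "V \<subseteq> \<Union> (?cell ` ?Ys)"
  proof
    fix v assume "v \<in> V"
    let ?T = "stable_trace E S v"
    have "?T \<noteq> {}" and "?T \<subseteq> S"
      using maximum_stable_dominating[OF assms(1-3) \<open>v \<in> V\<close>] by (auto simp: stable_trace_def)
    show "v \<in> \<Union> (?cell ` ?Ys)"
    proof (cases "card ?T < t")
      case True
      then have "?T \<in> ?Ys" and "v \<in> ?cell ?T"
        using \<open>?T \<noteq> {}\<close> \<open>?T \<subseteq> S\<close> \<open>v \<in> V\<close> by (auto simp: trace_cell_def)
      then show ?thesis by blast
    next
      case False
      then obtain Y where "Y \<subseteq> ?T" and "card Y = t"
        by (meson not_less obtain_subset_with_card_n)
      have "v \<notin> S"
      proof
        assume "v \<in> S"
        then have "?T = {v}" using assms(2) by (auto simp: stable_trace_def stable_in_def)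
        with False assms(4) show False by simp
      qed
      with \<open>Y \<subseteq> ?T\<close> have "\<forall>y\<in>Y. E v y" by (auto simp: stable_trace_def)
      moreover have "Y \<in> ?Ys"
        using \<open>Y \<subseteq> ?T\<close> \<open>?T \<subseteq> S\<close> \<open>card Y = t\<close> assms(4) by auto
      ultimately show ?thesis
        using \<open>v \<in> V\<close> \<open>card Y = t\<close> by (auto simp: trace_cell_def)
    qed
  qed
qed

lemma alpha_trace_cell_less:
  assumes "graph V E" and "Kst_free s t V E" and "stable_in V E S" and "card S = alpha V E"
    and "t \<le> s" and "Y \<subseteq> S" and "card Y \<le> t"
  shows "alpha (trace_cell V E t S Y) E < s"
proof (rule alpha_lessI)
  let ?C = "trace_cell V E t S Y"
  have "?C \<subseteq> V" by (auto simp: trace_cell_def)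
  then show "finite ?C" using graph_finite[OF assms(1)] by (rule finite_subset)
  fix Q assume "stable_in ?C E Q"
  with \<open>?C \<subseteq> V\<close> have "stable_in V E Q" and "Q \<subseteq> ?C" by (auto simp: stable_in_def)
  show "card Q < s"
  proof (cases "card Y < t")
    case True
    then have "\<forall>x\<in>Q. \<forall>y\<in>S - Y. x \<noteq> y \<and> \<not> E x y"
      using \<open>Q \<subseteq> ?C\<close> by (auto simp: trace_cell_def stable_trace_def)
    then have "card Q \<le> card Y"
      using card_stable_le_exchange[OF assms(1,3,4,6) \<open>stable_in V E Q\<close>] by blast
    with True assms(5) show ?thesis by linarith
  next
    case False
    then have "card Y = t" and "\<forall>x\<in>Q. \<forall>y\<in>Y. E x y"
      using assms(7) \<open>Q \<subseteq> ?C\<close> by (auto simp: trace_cell_def)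
    moreover have "stable_in V E Y" using assms(3,6) by (auto simp: stable_in_def)
    ultimately show ?thesis
      using Kst_free_common_neighbourhood[OF assms(1,2)] \<open>stable_in V E Q\<close> by blast
  qed
qed

lemma Kst_free_cover_small_alpha:
  assumes "graph V E" and "Kst_free s t V E" and "2 \<le> t" and "t \<le> s"
  obtains F where "\<Union>F = V" and "card F \<le> alpha V E ^ t" and "\<And>C. C \<in> F \<Longrightarrow> alpha C E < s"
proof -
  obtain S where S: "stable_in V E S" "card S = alpha V E"
    using ex_maximum_stable[OF graph_finite[OF assms(1)]] by blast
  then have "finite S" using finite_stable[OF assms(1)] by blast
  define Ys where "Ys = {Y. Y \<subseteq> S \<and> Y \<noteq> {} \<and> card Y \<le> t}"
  show thesis
  proof (rule that[of "trace_cell V E t S ` Ys"])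
    show "\<Union> (trace_cell V E t S ` Ys) = V"
      unfolding Ys_def using trace_cells_cover[OF assms(1) S assms(3)] .
    have "card (trace_cell V E t S ` Ys) \<le> card Ys"
      using \<open>finite S\<close> unfolding Ys_def by (intro card_image_le) simp
    also have "\<dots> \<le> alpha V E ^ t"
      unfolding Ys_def S(2)[symmetric] using \<open>finite S\<close> by (rule card_nonempty_subsets_le_power)
    finally show "card (trace_cell V E t S ` Ys) \<le> alpha V E ^ t" .
    show "alpha C E < s" if "C \<in> trace_cell V E t S ` Ys" for C
      using that alpha_trace_cell_less[OF assms(1,2) S assms(4)] unfolding Ys_def by blast
  qed
qed

theorem mainTheorem5:
  fixes s t :: nat and c :: real and V :: "'a set" and E :: "'a \<Rightarrow> 'a \<Rightarrow> bool" and w :: real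
  assumes "2 \<le> t" and "t \<le> s" and "real s \<le> c"
    and hyp: "\<forall>(w'::real) (V'::'a set) E'. w' > 1 \<longrightarrow> graph V' E' \<longrightarrow>
              alpha V' E' < s \<longrightarrow> real (omega V' E') \<le> w' \<longrightarrow>
              real (card V') < c * w' ^ (s - 1) / (log 2 w') ^ (s - 2)"
    and "graph V E" and "Kst_free s t V E"
    and "w > 1" and "real (omega V E) \<le> w"
  shows "real (card V) \<le> c * real (alpha V E) ^ t * w ^ (s - 1) / (log 2 w) ^ (s - 2)"
proof -
  define b where "b = c * w ^ (s - 1) / (log 2 w) ^ (s - 2)"
  have "finite V" using \<open>graph V E\<close> by (rule graph_finite)
  obtain F where F: "\<Union>F = V" "card F \<le> alpha V E ^ t" "\<And>C. C \<in> F \<Longrightarrow> alpha C E < s"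
    using Kst_free_cover_small_alpha[OF \<open>graph V E\<close> \<open>Kst_free s t V E\<close> assms(1,2)] by blast
  have "real (card C) \<le> b" if "C \<in> F" for C
  proof -
    have "C \<subseteq> V" using F(1) that by blast
    then have "graph C E" and "real (omega C E) \<le> w"
      using graph_subset[OF \<open>graph V E\<close>] omega_mono[OF \<open>finite V\<close>, of C E] assms(8) by auto
    then show ?thesis
      using hyp[rule_format, OF \<open>w > 1\<close> \<open>graph C E\<close> F(3)[OF that]] unfolding b_def by simp
  qed
  then have "real (card V) \<le> real (card F) * b"
    using card_Union_le_mult[of F b] F(1) \<open>finite V\<close> by simp
  also have "\<dots> \<le> real (alpha V E) ^ t * b"
  proof (rule mult_right_mono)
    show "real (card F) \<le> real (alpha V E) ^ t"
      using F(2) by (metis of_nat_le_iff of_nat_power)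
    show "0 \<le> b" using assms(3,7) unfolding b_def by simp
  qed
  finally show ?thesis by (simp only: b_def times_divide_eq_right mult_ac)
qed

end
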